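(* Let $(X, A, Y(0), Y(1))$ be a random vector with $X \in \mathbb{R}^d$ covariates, $A \in \{0,1\}$ a binary treatment and $Y(0), Y(1) \in \mathbb{R}$ potential outcomes. Let $f:\mathbb{R}^d \to [0,1]$ be a weight function and let $V \sim \mathrm{Unif}(0,1)$ be drawn independently of $(X, A, Y(0), Y(1))$. Define the pair of flip interventions \[ D_f(0) = A\,\mathbf{1}\{V > f(X)\}, \qquad D_f(1) = A + (1-A)\,\mathbf{1}\{V \le f(X)\}, \] and the interventional flip effect \[ \psi_f = \frac{\mathbb{E}\big[ Y\{D_f(1)\} - Y\{D_f(0)\}\big]}{\mathbb{E}\{D_f(1) - D_f(0)\}}. \] Then \[ \psi_f = \mathbb{E}\left[ \frac{\mathbb{E}\{Y(1) - Y(0) \mid X\}\, f(X)}{\mathbb{E}\{f(X)\}} \right]. \]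
   Context: For a (possibly random) treatment decision $D \in \{0,1\}$, $Y(D)$ denotes the potential outcome under decision $D$, i.e. $Y(D) = D\,Y(1) + (1-D)\,Y(0)$. The observed outcome is $Y = Y(A)$ (consistency). The right-hand side is a weighted average treatment effect with weight $f$; the ratio $\psi_f$ is assumed well defined (i.e. $\mathbb{E}\{f(X)\}>0$ and the relevant expectations exist). *)

theory Defs
  imports "HOL-Probability.Probability"
begin

definition pot_outcome :: "('w \<Rightarrow> real) \<Rightarrow> ('w \<Rightarrow> real) \<Rightarrow> ('w \<Rightarrow> real) \<Rightarrow> 'w \<Rightarrow> real" where
  "pot_outcome Y0 Y1 D w = D w * Y1 w + (1 - D w) * Y0 w"

definition flip0 :: "('x \<Rightarrow> real) \<Rightarrow> ('w \<Rightarrow> 'x) \<Rightarrow> ('w \<Rightarrow> real) \<Rightarrow> ('w \<Rightarrow> real) \<Rightarrow> 'w \<Rightarrow> real" where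
  "flip0 f X A V w = A w * of_bool (V w > f (X w))"

definition flip1 :: "('x \<Rightarrow> real) \<Rightarrow> ('w \<Rightarrow> 'x) \<Rightarrow> ('w \<Rightarrow> real) \<Rightarrow> ('w \<Rightarrow> real) \<Rightarrow> 'w \<Rightarrow> real" where
  "flip1 f X A V w = A w + (1 - A w) * of_bool (V w \<le> f (X w))"

definition flip_effect :: "'w measure \<Rightarrow> ('x \<Rightarrow> real) \<Rightarrow> ('w \<Rightarrow> 'x) \<Rightarrow> ('w \<Rightarrow> real) \<Rightarrow> ('w \<Rightarrow> real)
    \<Rightarrow> ('w \<Rightarrow> real) \<Rightarrow> ('w \<Rightarrow> real) \<Rightarrow> real" where
  "flip_effect M f X A Y0 Y1 V =
     (\<integral>w. pot_outcome Y0 Y1 (flip1 f X A V) w - pot_outcome Y0 Y1 (flip0 f X A V) w \<partial>M)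
     / (\<integral>w. flip1 f X A V w - flip0 f X A V w \<partial>M)"

end

theory Submission
  imports Defs
begin

text \<open>Where A is 0 or 1, the two flip interventions differ exactly on the event V \<le> f(X), on which
  D_f(1) = 1 and D_f(0) = 0. So the numerator of psi_f is E[1{V \<le> f(X)} (Y(1) - Y(0))] and the
  denominator is P(V \<le> f(X)). Because V is uniform and independent of (X, A, Y(0), Y(1)), Fubini
  replaces the indicator 1{V \<le> f(X)} by its conditional probability f(X); the tower property then
  turns E[f(X) (Y(1) - Y(0))] into E[f(X) E{Y(1) - Y(0) | X}].\<close>

lemma (in prob_space) distr_pair_eq_pair_measureI:
  assumes X[measurable]: "random_variable S X" and Y[measurable]: "random_variable T Y"
    and rect: "\<forall>A\<in>sets S. \<forall>B\<in>sets T.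
      prob {w\<in>space M. X w \<in> A \<and> Y w \<in> B} = prob {w\<in>space M. X w \<in> A} * prob {w\<in>space M. Y w \<in> B}"
  shows "distr M (S \<Otimes>\<^sub>M T) (\<lambda>w. (X w, Y w)) = distr M S X \<Otimes>\<^sub>M distr M T Y"
proof -
  interpret PX: prob_space "distr M S X" using X by (rule prob_space_distr)
  interpret PY: prob_space "distr M T Y" using Y by (rule prob_space_distr)
  show ?thesis
  proof (rule pair_measure_eqI[symmetric])
    fix A B assume "A \<in> sets (distr M S X)" and "B \<in> sets (distr M T Y)"
    then have A: "A \<in> sets S" and B: "B \<in> sets T" by simp_all
    have "emeasure (distr M (S \<Otimes>\<^sub>M T) (\<lambda>w. (X w, Y w))) (A \<times> B)
        = prob {w\<in>space M. X w \<in> A \<and> Y w \<in> B}"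
      using A B by (subst emeasure_distr) (auto simp: emeasure_eq_measure intro!: arg_cong[where f=prob])
    also have "\<dots> = prob {w\<in>space M. X w \<in> A} * prob {w\<in>space M. Y w \<in> B}"
      using A B by (simp add: rect)
    also have "\<dots> = emeasure (distr M S X) A * emeasure (distr M T Y) B"
      using A B by (simp add: emeasure_distr emeasure_eq_measure ennreal_mult' vimage_def Int_def conj_commute)
    finally show "emeasure (distr M S X) A * emeasure (distr M T Y) B
        = emeasure (distr M (S \<Otimes>\<^sub>M T) (\<lambda>w. (X w, Y w))) (A \<times> B)" by simp
  qed (simp_all add: PX.sigma_finite_measure_axioms PY.sigma_finite_measure_axioms)
qed

lemma measure_uniform_unit_interval_atMost:
  fixes t :: real
  assumes "0 \<le> t" "t \<le> 1"
  shows "measure (uniform_measure lborel {0<..<1}) {..t} = t"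
proof -
  have "emeasure lborel ({0<..<1} \<inter> {..t}) = ennreal t"
  proof (cases "t = 1")
    case True
    then have "{0<..<1} \<inter> {..t} = {0<..<1}" by auto
    then show ?thesis using True by simp
  next
    case False
    then have "{0<..<1} \<inter> {..t} = {0<..t}" using assms by auto
    then show ?thesis using assms by (simp add: emeasure_lborel_Ioc)
  qed
  then have "emeasure (uniform_measure lborel {0<..<1}) {..t} = ennreal t"
    by (simp add: divide_ennreal_def)
  then show ?thesis using assms by (simp add: measure_def)
qed

lemma (in prob_space) integral_of_bool_le_indep_uniform:
  fixes h :: "'n \<Rightarrow> real"
  assumes [measurable]: "random_variable borel V" "random_variable N Z"
    and indep: "distr M (borel \<Otimes>\<^sub>M N) (\<lambda>w. (V w, Z w)) = distr M borel V \<Otimes>\<^sub>M distr M N Z"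
    and unif: "distr M lborel V = uniform_measure lborel {0<..<1}"
    and [measurable]: "g \<in> borel_measurable N" and g01: "\<And>z. z \<in> space N \<Longrightarrow> g z \<in> {0..1}"
    and [measurable]: "h \<in> borel_measurable N" and h_int: "integrable M (\<lambda>w. h (Z w))"
  shows "(\<integral>w. of_bool (V w \<le> g (Z w)) * h (Z w) \<partial>M) = (\<integral>w. g (Z w) * h (Z w) \<partial>M)"
proof -
  define PV where "PV = distr M borel V"
  define PZ where "PZ = distr M N Z"
  interpret PV: prob_space PV unfolding PV_def by (rule prob_space_distr) simp
  interpret PZ: prob_space PZ unfolding PZ_def by (rule prob_space_distr) simp
  interpret pair_sigma_finite PV PZ ..
  define \<phi> where "\<phi> v z = of_bool (v \<le> g z) * h z" for v z
  have [measurable]: "case_prod \<phi> \<in> borel_measurable (borel \<Otimes>\<^sub>M N)"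
    unfolding \<phi>_def by measurable
  have joint: "PV \<Otimes>\<^sub>M PZ = distr M (borel \<Otimes>\<^sub>M N) (\<lambda>w. (V w, Z w))"
    unfolding PV_def PZ_def indep ..
  have "integrable M (\<lambda>w. \<phi> (V w) (Z w))"
    by (rule Bochner_Integration.integrable_bound[OF h_int]) (auto simp: \<phi>_def)
  then have \<phi>_int: "integrable (PV \<Otimes>\<^sub>M PZ) (case_prod \<phi>)"
    unfolding joint by (subst integrable_distr_eq) auto
  have PV_unif: "PV = uniform_measure lborel {0<..<1}"
    unfolding PV_def unif[symmetric] by (rule distr_cong) auto
  have inner: "(\<integral>v. \<phi> v z \<partial>PV) = g z * h z" if "z \<in> space N" for z
  proof -
    have cdf: "measure PV {..g z} = g z"
      unfolding PV_unif using g01[OF that] by (intro measure_uniform_unit_interval_atMost) auto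
    have "(\<integral>v. \<phi> v z \<partial>PV) = (\<integral>v. indicator {..g z} v * h z \<partial>PV)"
      by (rule Bochner_Integration.integral_cong) (auto simp: \<phi>_def indicator_def)
    also have "\<dots> = measure PV {..g z} * h z"
      by (simp add: PV_def)
    also have "\<dots> = g z * h z"
      by (simp add: cdf)
    finally show ?thesis .
  qed
  have "(\<integral>w. of_bool (V w \<le> g (Z w)) * h (Z w) \<partial>M) = (\<integral>w. case_prod \<phi> (V w, Z w) \<partial>M)"
    by (simp add: \<phi>_def)
  also have "\<dots> = integral\<^sup>L (PV \<Otimes>\<^sub>M PZ) (case_prod \<phi>)"
    unfolding joint by (subst integral_distr) auto
  also have "\<dots> = (\<integral>z. (\<integral>v. \<phi> v z \<partial>PV) \<partial>PZ)"
    by (rule integral_snd[OF \<phi>_int, symmetric])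
  also have "\<dots> = (\<integral>z. g z * h z \<partial>PZ)"
    by (rule Bochner_Integration.integral_cong) (auto simp: PZ_def inner)
  also have "\<dots> = (\<integral>w. g (Z w) * h (Z w) \<partial>M)"
    unfolding PZ_def by (subst integral_distr) auto
  finally show ?thesis .
qed

lemma (in prob_space) integral_mult_real_cond_exp_vimage:
  assumes X[measurable]: "random_variable N X"
    and [measurable]: "g \<in> borel_measurable N" "Y \<in> borel_measurable M"
    and int: "integrable M (\<lambda>w. g (X w) * Y w)"
  shows "(\<integral>w. g (X w) * real_cond_exp M (vimage_algebra (space M) X N) Y w \<partial>M)
       = (\<integral>w. g (X w) * Y w \<partial>M)"
proof -
  let ?F = "vimage_algebra (space M) X N"
  have "subalgebra M ?F"
    using measurable_iff_sets[THEN iffD1, OF X] by (simp add: subalgebra_def)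
  then interpret finite_measure_subalgebra M ?F
    by unfold_locales
  have "(\<lambda>w. g (X w)) \<in> borel_measurable ?F"
    by (rule measurable_compose[OF measurable_vimage_algebra1]) (use X in \<open>auto intro: measurable_space\<close>)
  then show ?thesis
    using int by (intro real_cond_exp_intg(2)) simp_all
qed

lemma (in prob_space) integral_of_bool_le_weight_indep_uniform:
  fixes X :: "'a \<Rightarrow> 'x::second_countable_topology" and A Y0 Y1 V :: "'a \<Rightarrow> real"
    and h :: "'x \<times> real \<times> real \<times> real \<Rightarrow> real"
  assumes [measurable]: "random_variable borel X" "random_variable borel A"
      "random_variable borel Y0" "random_variable borel Y1"
    and f[measurable]: "f \<in> borel_measurable borel" and f01: "\<forall>x. f x \<in> {0..1}"
    and V[measurable]: "random_variable borel V"
    and unif: "distr M lborel V = uniform_measure lborel {0<..<1}"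
    and indep: "\<forall>S\<in>sets borel. \<forall>T\<in>sets borel.
      prob {w\<in>space M. V w \<in> S \<and> (X w, A w, Y0 w, Y1 w) \<in> T}
      = prob {w\<in>space M. V w \<in> S} * prob {w\<in>space M. (X w, A w, Y0 w, Y1 w) \<in> T}"
    and h: "h \<in> borel_measurable borel" "integrable M (\<lambda>w. h (X w, A w, Y0 w, Y1 w))"
  shows "(\<integral>w. of_bool (V w \<le> f (X w)) * h (X w, A w, Y0 w, Y1 w) \<partial>M)
       = (\<integral>w. f (X w) * h (X w, A w, Y0 w, Y1 w) \<partial>M)"
proof -
  have Z[measurable]: "(\<lambda>w. (X w, A w, Y0 w, Y1 w)) \<in> borel_measurable M"
    by measurable
  have joint: "distr M (borel \<Otimes>\<^sub>M borel) (\<lambda>w. (V w, X w, A w, Y0 w, Y1 w))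
      = distr M borel V \<Otimes>\<^sub>M distr M borel (\<lambda>w. (X w, A w, Y0 w, Y1 w))"
    by (rule distr_pair_eq_pair_measureI[OF V Z indep])
  have f_fst: "(\<lambda>z. f (fst z)) \<in> borel_measurable (borel :: ('x \<times> real \<times> real \<times> real) measure)"
    by (intro measurable_compose[OF _ f] borel_measurable_continuous_onI continuous_intros)
  have "f (fst z) \<in> {0..1}" for z
    using f01 by simp
  from integral_of_bool_le_indep_uniform[OF V Z joint unif f_fst this h] show ?thesis
    by simp
qed

lemma integral_flip_diff:
  assumes "\<forall>w\<in>space M. A w \<in> {0, 1}"
  shows "(\<integral>w. flip1 f X A V w - flip0 f X A V w \<partial>M) = (\<integral>w. of_bool (V w \<le> f (X w)) \<partial>M)"
  using assms by (intro Bochner_Integration.integral_cong) (auto simp: flip0_def flip1_def)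

lemma integral_pot_outcome_flip_diff:
  assumes "\<forall>w\<in>space M. A w \<in> {0, 1}"
  shows "(\<integral>w. pot_outcome Y0 Y1 (flip1 f X A V) w - pot_outcome Y0 Y1 (flip0 f X A V) w \<partial>M)
       = (\<integral>w. of_bool (V w \<le> f (X w)) * (Y1 w - Y0 w) \<partial>M)"
  using assms by (intro Bochner_Integration.integral_cong) (auto simp: pot_outcome_def flip0_def flip1_def)

theorem proposition1:
  fixes M :: "'w measure"
    and X :: "'w \<Rightarrow> real ^ 'd"
    and A Y0 Y1 V :: "'w \<Rightarrow> real"
    and f :: "real ^ 'd \<Rightarrow> real"
  assumes "prob_space M"
    and "X \<in> borel_measurable M"
    and "A \<in> borel_measurable M"
    and "\<forall>w\<in>space M. A w \<in> {0, 1}"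
    and "integrable M Y0"
    and "integrable M Y1"
    and "f \<in> borel_measurable borel"
    and "\<forall>x. f x \<in> {0..1}"
    and "V \<in> borel_measurable M"
    and "distr M lborel V = uniform_measure lborel {0<..<1}"
    and "\<forall>S\<in>sets (borel :: real measure). \<forall>T\<in>sets (borel :: ((real ^ 'd) \<times> real \<times> real \<times> real) measure).
         measure M {w\<in>space M. V w \<in> S \<and> (X w, A w, Y0 w, Y1 w) \<in> T}
         = measure M {w\<in>space M. V w \<in> S} * measure M {w\<in>space M. (X w, A w, Y0 w, Y1 w) \<in> T}"
    and "(\<integral>w. f (X w) \<partial>M) > 0"
  shows "flip_effect M f X A Y0 Y1 V =
    (\<integral>w. real_cond_exp M (vimage_algebra (space M) X borel) (\<lambda>w. Y1 w - Y0 w) w * f (X w)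
            / (\<integral>w. f (X w) \<partial>M) \<partial>M)"
proof -
  interpret prob_space M by fact
  note [measurable] = assms(2,3,7,9)
  have Y_meas[measurable]: "random_variable borel Y0" "random_variable borel Y1"
    using assms(5,6) by (simp_all add: borel_measurable_integrable)
  note indicator_to_weight = integral_of_bool_le_weight_indep_uniform[OF assms(2,3) Y_meas assms(7-11)]
  have Y_int: "integrable M (\<lambda>w. Y1 w - Y0 w)"
    using assms(5,6) by simp
  have "(\<lambda>z. snd (snd (snd z)) - fst (snd (snd z)))
      \<in> borel_measurable (borel :: ((real ^ 'd) \<times> real \<times> real \<times> real) measure)"
    by (intro borel_measurable_continuous_onI continuous_intros)
  from indicator_to_weight[OF this] Y_int have num:
    "(\<integral>w. of_bool (V w \<le> f (X w)) * (Y1 w - Y0 w) \<partial>M) = (\<integral>w. f (X w) * (Y1 w - Y0 w) \<partial>M)"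
    by simp
  from indicator_to_weight[of "\<lambda>_. 1", OF borel_measurable_const integrable_const] have den:
    "(\<integral>w. of_bool (V w \<le> f (X w)) \<partial>M) = (\<integral>w. f (X w) \<partial>M)"
    by simp
  have "integrable M (\<lambda>w. f (X w) * (Y1 w - Y0 w))"
    by (rule Bochner_Integration.integrable_bound[OF Y_int])
      (use assms(8) in \<open>auto simp: abs_mult intro!: mult_left_le_one_le\<close>)
  from integral_mult_real_cond_exp_vimage[OF assms(2,7) borel_measurable_integrable[OF Y_int] this]
  show ?thesis
    unfolding flip_effect_def integral_pot_outcome_flip_diff[OF assms(4)] integral_flip_diff[OF assms(4)] num den
    by (simp add: mult.commute)
qed

end
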